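(* Let $Y^{(1)},Y^{(0)}$ be nonnegative random variables (potential outcomes) and $Z$ a random covariate vector. Let $$D(z)=\frac{\mathrm{E}(Y^{(1)}\mid Z=z)}{\mathrm{E}(Y^{(0)}\mid Z=z)}\quad\text{and}\quad AD(c)=\frac{\mathrm{E}(Y^{(1)}\mid D(Z)\ge c)}{\mathrm{E}(Y^{(0)}\mid D(Z)\ge c)}.$$ If all involved expectations are finite and $0<D(Z)<\infty$ for almost every $Z$, then $AD(c)$ is monotone increasing in $c$, and $AD(c)\ge c$ for any $c$. *)

theory Defs
  imports "HOL-Probability.Probability"
begin

definition cond_exp_event :: "'a measure \<Rightarrow> ('a \<Rightarrow> real) \<Rightarrow> 'a set \<Rightarrow> real" where
  "cond_exp_event M X A = (\<integral>x\<in>A. X x \<partial>M) / measure M A"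

text \<open>D(z) = E(Y1 | Z = z) / E(Y0 | Z = z), given versions m1, m0 of the regression functions.\<close>
definition ratio_D :: "('b \<Rightarrow> real) \<Rightarrow> ('b \<Rightarrow> real) \<Rightarrow> 'b \<Rightarrow> real" where
  "ratio_D m1 m0 z = m1 z / m0 z"

definition AD :: "'a measure \<Rightarrow> ('a \<Rightarrow> real) \<Rightarrow> ('a \<Rightarrow> real) \<Rightarrow> ('b \<Rightarrow> real) \<Rightarrow> ('a \<Rightarrow> 'b) \<Rightarrow> real \<Rightarrow> real" where
  "AD M Y1 Y0 D Z c =
     cond_exp_event M Y1 {x \<in> space M. c \<le> D (Z x)} / cond_exp_event M Y0 {x \<in> space M. c \<le> D (Z x)}"

end

theory Submission
  imports Defs
begin

text \<open>Write \<open>g\<^sub>i = E(Y\<^sub>i | Z)\<close> and \<open>d = D(Z)\<close>, so that \<open>g\<^sub>1 = d g\<^sub>0\<close> almost surely with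
  \<open>g\<^sub>0 > 0\<close>. The events \<open>{d \<ge> c}\<close> are \<open>Z\<close>-measurable, so on them \<open>Y\<^sub>i\<close> may be replaced by
  \<open>g\<^sub>i\<close>, and \<open>AD(c)\<close> becomes the \<open>g\<^sub>0\<close>-weighted mean of \<open>d\<close> over \<open>{d \<ge> c}\<close>, which is at
  least \<open>c\<close>. For \<open>c \<le> c'\<close> this mean is a mediant of the means over \<open>{c \<le> d < c'}\<close> (at most
  \<open>c'\<close>) and over \<open>{d \<ge> c'}\<close> (at least \<open>c'\<close>), hence does not exceed the latter.\<close>

lemma mediant_le_right:
  fixes a b p q c :: real
  assumes "0 \<le> p" "0 < q" "a \<le> c * p" "c * q \<le> b"
  shows "(a + b) / (p + q) \<le> b / q"
proof -
  have "a * q \<le> c * q * p"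
    using assms by (metis mult.commute mult.left_commute mult_right_mono less_imp_le)
  also have "\<dots> \<le> b * p"
    using assms by (simp add: mult_right_mono)
  finally have "a * q \<le> b * p" .
  then show ?thesis
    using assms by (simp add: divide_simps algebra_simps)
qed

lemma integrable_imp_set_integrable:
  fixes f :: "'a \<Rightarrow> 'b::{banach, second_countable_topology}"
  shows "A \<in> sets M \<Longrightarrow> integrable M f \<Longrightarrow> set_integrable M A f"
  unfolding set_integrable_def by (rule integrable_mult_indicator)

lemma (in finite_measure) set_integral_measure_zero:
  fixes f :: "'a \<Rightarrow> real"
  assumes "A \<in> sets M" "measure M A = 0"
  shows "(\<integral>x\<in>A. f x \<partial>M) = 0"
proof -
  have "AE x in M. x \<notin> A"
    using assms by (intro AE_not_in) (simp add: null_sets_def emeasure_eq_measure)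
  then show ?thesis
    unfolding set_lebesgue_integral_def by (intro integral_eq_zero_AE) auto
qed

lemma set_integral_pos_AE:
  fixes f :: "'a \<Rightarrow> real"
  assumes A: "A \<in> sets M" and f: "set_integrable M A f"
    and pos: "AE x \<in> A in M. 0 < f x" and "0 < measure M A"
  shows "0 < (\<integral>x\<in>A. f x \<partial>M)"
proof -
  have nonneg: "AE x in M. 0 \<le> indicator A x * f x"
    using pos by eventually_elim (auto simp: indicator_def)
  have "(\<integral>x\<in>A. f x \<partial>M) \<noteq> 0"
  proof
    assume "(\<integral>x\<in>A. f x \<partial>M) = 0"
    then have "AE x in M. indicator A x * f x = 0"
      using integral_nonneg_eq_0_iff_AE[OF _ nonneg] f
      by (simp add: set_integrable_def set_lebesgue_integral_def)
    then have "AE x in M. x \<notin> A"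
      using pos by eventually_elim (auto simp: indicator_def)
    then have "emeasure M A = 0"
      using AE_iff_measurable[OF A, of "\<lambda>x. x \<notin> A"] sets.sets_into_space[OF A] by auto
    then have "measure M A = 0"
      by (simp add: measure_def)
    with \<open>0 < measure M A\<close> show False by simp
  qed
  moreover have "0 \<le> (\<integral>x\<in>A. f x \<partial>M)"
    unfolding set_lebesgue_integral_def using nonneg by (simp add: integral_nonneg_AE)
  ultimately show ?thesis by simp
qed

lemma set_integral_ge_mult_if_factor_ge:
  fixes v w d :: "'a \<Rightarrow> real"
  assumes "set_integrable M B v" "set_integrable M B w"
    and "AE x \<in> B in M. 0 \<le> w x \<and> v x = d x * w x \<and> c \<le> d x"
  shows "c * (\<integral>x\<in>B. w x \<partial>M) \<le> (\<integral>x\<in>B. v x \<partial>M)"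
proof -
  have "AE x \<in> B in M. c * w x \<le> v x"
    using assms(3) by eventually_elim (auto intro: mult_right_mono)
  then have "(\<integral>x\<in>B. c * w x \<partial>M) \<le> (\<integral>x\<in>B. v x \<partial>M)"
    using assms(1,2) by (intro set_integral_mono_AE) auto
  then show ?thesis by simp
qed

lemma set_integral_le_mult_if_factor_le:
  fixes v w d :: "'a \<Rightarrow> real"
  assumes "set_integrable M B v" "set_integrable M B w"
    and "AE x \<in> B in M. 0 \<le> w x \<and> v x = d x * w x \<and> d x \<le> c"
  shows "(\<integral>x\<in>B. v x \<partial>M) \<le> c * (\<integral>x\<in>B. w x \<partial>M)"
proof -
  have "AE x \<in> B in M. v x \<le> c * w x"
    using assms(3) by eventually_elim (auto intro: mult_right_mono)
  then have "(\<integral>x\<in>B. v x \<partial>M) \<le> (\<integral>x\<in>B. c * w x \<partial>M)"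
    using assms(1,2) by (intro set_integral_mono_AE) auto
  then show ?thesis by simp
qed

lemma superlevel_ratio_ge:
  fixes v w d :: "'a \<Rightarrow> real"
  assumes [measurable]: "d \<in> borel_measurable M"
    and v: "integrable M v" and w: "integrable M w"
    and factor: "AE x in M. 0 < w x \<and> v x = d x * w x"
    and pos: "0 < measure M {x \<in> space M. c \<le> d x}"
  shows "c \<le> (\<integral>x\<in>{x \<in> space M. c \<le> d x}. v x \<partial>M)
    / (\<integral>x\<in>{x \<in> space M. c \<le> d x}. w x \<partial>M)"
proof -
  define A where "A = {x \<in> space M. c \<le> d x}"
  have A[measurable]: "A \<in> sets M" unfolding A_def by measurable
  have vA: "set_integrable M A v" and wA: "set_integrable M A w"
    using A v w by (simp_all add: integrable_imp_set_integrable)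
  have "0 < (\<integral>x\<in>A. w x \<partial>M)"
    by (rule set_integral_pos_AE[OF A wA _ pos[folded A_def]])
      (use factor in \<open>eventually_elim, simp\<close>)
  moreover have "c * (\<integral>x\<in>A. w x \<partial>M) \<le> (\<integral>x\<in>A. v x \<partial>M)"
    by (rule set_integral_ge_mult_if_factor_ge[where d=d, OF vA wA])
      (use factor in \<open>eventually_elim, simp add: A_def\<close>)
  ultimately show ?thesis
    unfolding A_def by (simp add: pos_le_divide_eq)
qed

lemma superlevel_ratio_mono:
  fixes v w d :: "'a \<Rightarrow> real"
  assumes [measurable]: "d \<in> borel_measurable M"
    and v: "integrable M v" and w: "integrable M w"
    and factor: "AE x in M. 0 < w x \<and> v x = d x * w x"
    and "c \<le> c'" and pos: "0 < measure M {x \<in> space M. c' \<le> d x}"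
  shows "(\<integral>x\<in>{x \<in> space M. c \<le> d x}. v x \<partial>M) / (\<integral>x\<in>{x \<in> space M. c \<le> d x}. w x \<partial>M)
    \<le> (\<integral>x\<in>{x \<in> space M. c' \<le> d x}. v x \<partial>M)
      / (\<integral>x\<in>{x \<in> space M. c' \<le> d x}. w x \<partial>M)"
proof -
  define A where "A = {x \<in> space M. c' \<le> d x}"
  define B where "B = {x \<in> space M. c \<le> d x \<and> d x < c'}"
  have A: "A \<in> sets M" and B: "B \<in> sets M" unfolding A_def B_def by measurable
  have vA: "set_integrable M A v" and wA: "set_integrable M A w"
    and vB: "set_integrable M B v" and wB: "set_integrable M B w"
    using A B v w by (simp_all add: integrable_imp_set_integrable)
  have split: "{x \<in> space M. c \<le> d x} = B \<union> A" "B \<inter> A = {}"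
    using \<open>c \<le> c'\<close> by (auto simp: A_def B_def)
  have "0 < (\<integral>x\<in>A. w x \<partial>M)"
    by (rule set_integral_pos_AE[OF A wA _ pos[folded A_def]])
      (use factor in \<open>eventually_elim, simp\<close>)
  moreover have "0 \<le> (\<integral>x\<in>B. w x \<partial>M)"
    unfolding set_lebesgue_integral_def
    by (rule integral_nonneg_AE) (use factor in \<open>eventually_elim, simp add: indicator_def\<close>)
  moreover have "(\<integral>x\<in>B. v x \<partial>M) \<le> c' * (\<integral>x\<in>B. w x \<partial>M)"
    by (rule set_integral_le_mult_if_factor_le[where d=d, OF vB wB])
      (use factor in \<open>eventually_elim, simp add: B_def\<close>)
  moreover have "c' * (\<integral>x\<in>A. w x \<partial>M) \<le> (\<integral>x\<in>A. v x \<partial>M)"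
    by (rule set_integral_ge_mult_if_factor_ge[where d=d, OF vA wA])
      (use factor in \<open>eventually_elim, simp add: A_def\<close>)
  ultimately show ?thesis
    unfolding split(1) set_integral_Un[OF split(2) vB vA] set_integral_Un[OF split(2) wB wA]
    by (fold A_def) (rule mediant_le_right)
qed

lemma (in sigma_finite_subalgebra) set_integral_eq_real_cond_exp_version:
  fixes f g :: "'a \<Rightarrow> real"
  assumes "integrable M f" "A \<in> sets F"
    and g: "g \<in> borel_measurable M" "AE x in M. g x = real_cond_exp M F f x"
  shows "(\<integral>x\<in>A. f x \<partial>M) = (\<integral>x\<in>A. g x \<partial>M)"
proof -
  have [measurable]: "A \<in> sets M"
    using assms(2) subalg by (auto simp: subalgebra_def)
  have "(\<integral>x\<in>A. f x \<partial>M) = (\<integral>x\<in>A. real_cond_exp M F f x \<partial>M)"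
    by (rule real_cond_exp_intA[OF assms(1,2)])
  also have "\<dots> = (\<integral>x\<in>A. g x \<partial>M)"
    unfolding set_lebesgue_integral_def
    using g by (intro integral_cong_AE) auto
  finally show ?thesis .
qed

lemma (in sigma_finite_subalgebra) integrable_real_cond_exp_version:
  fixes f g :: "'a \<Rightarrow> real"
  assumes "integrable M f" "g \<in> borel_measurable M" "AE x in M. g x = real_cond_exp M F f x"
  shows "integrable M g"
  using integrable_cong_AE[OF assms(2) _ assms(3)] real_cond_exp_int(1)[OF assms(1)] by simp

lemma (in sigma_finite_subalgebra) AE_real_cond_exp_version_nonneg:
  fixes f g :: "'a \<Rightarrow> real"
  assumes "f \<in> borel_measurable M" "\<forall>x\<in>space M. 0 \<le> f x"
    and "AE x in M. g x = real_cond_exp M F f x"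
  shows "AE x in M. 0 \<le> g x"
proof -
  have "AE x in M. 0 \<le> real_cond_exp M F f x"
    using assms(1,2) by (intro real_cond_exp_pos) auto
  with assms(3) show ?thesis
    by eventually_elim simp
qed

lemma AE_ratio_D_factor:
  fixes m1 m0 :: "'b \<Rightarrow> real"
  assumes "AE x in M. 0 \<le> m0 (Z x)" "AE x in M. 0 < ratio_D m1 m0 (Z x)"
  shows "AE x in M. 0 < m0 (Z x) \<and> m1 (Z x) = ratio_D m1 m0 (Z x) * m0 (Z x)"
  \<comment> \<open>\<open>0 < m\<^sub>1 / m\<^sub>0\<close> excludes \<open>m\<^sub>0 = 0\<close>, where the division would return \<open>0\<close>.\<close>
  using assms unfolding ratio_D_def by eventually_elim (auto simp: field_simps)

lemma (in finite_measure) finite_measure_subalgebra_vimage_algebra: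
  assumes "Z \<in> M \<rightarrow>\<^sub>M N"
  shows "finite_measure_subalgebra M (vimage_algebra (space M) Z N)"
  by unfold_locales (simp add: subalgebra_def sets_image_in_sets[OF refl assms])

lemma pred_in_vimage_algebra:
  assumes "Z \<in> M \<rightarrow>\<^sub>M N" "{z \<in> space N. P z} \<in> sets N"
  shows "{x \<in> space M. P (Z x)} \<in> sets (vimage_algebra (space M) Z N)"
proof -
  have "{x \<in> space M. P (Z x)} = Z -` {z \<in> space N. P z} \<inter> space M"
    using measurable_space[OF assms(1)] by auto
  then show ?thesis
    using in_vimage_algebra[OF assms(2)] by simp
qed

lemma (in finite_measure) AD_eq_set_integral_ratio:
  assumes "{x \<in> space M. c \<le> D (Z x)} \<in> sets M"
  shows "AD M Y1 Y0 D Z c =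
    (\<integral>x\<in>{x \<in> space M. c \<le> D (Z x)}. Y1 x \<partial>M)
    / (\<integral>x\<in>{x \<in> space M. c \<le> D (Z x)}. Y0 x \<partial>M)"
  using assms set_integral_measure_zero
  by (cases "measure M {x \<in> space M. c \<le> D (Z x)} = 0") (simp_all add: AD_def cond_exp_event_def)

lemma (in finite_measure) AD_eq_superlevel_ratio_of_regressions:
  fixes Y1 Y0 :: "'a \<Rightarrow> real" and D m1 m0 :: "'b \<Rightarrow> real"
  assumes [measurable]: "Z \<in> M \<rightarrow>\<^sub>M N"
    "D \<in> borel_measurable N" "m1 \<in> borel_measurable N" "m0 \<in> borel_measurable N"
    and "integrable M Y1" "integrable M Y0"
    and "AE x in M. m1 (Z x) = real_cond_exp M (vimage_algebra (space M) Z N) Y1 x"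
    and "AE x in M. m0 (Z x) = real_cond_exp M (vimage_algebra (space M) Z N) Y0 x"
  shows "AD M Y1 Y0 D Z c =
    (\<integral>x\<in>{x \<in> space M. c \<le> D (Z x)}. m1 (Z x) \<partial>M)
    / (\<integral>x\<in>{x \<in> space M. c \<le> D (Z x)}. m0 (Z x) \<partial>M)"
proof -
  interpret finite_measure_subalgebra M "vimage_algebra (space M) Z N"
    by (rule finite_measure_subalgebra_vimage_algebra) fact
  have A: "{x \<in> space M. c \<le> D (Z x)} \<in> sets (vimage_algebra (space M) Z N)"
    by (rule pred_in_vimage_algebra) measurable
  have "{x \<in> space M. c \<le> D (Z x)} \<in> sets M"
    by measurable
  moreover have "(\<lambda>x. m1 (Z x)) \<in> borel_measurable M"
    by measurable
  moreover have "(\<lambda>x. m0 (Z x)) \<in> borel_measurable M"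
    by measurable
  ultimately show ?thesis
    using set_integral_eq_real_cond_exp_version[OF assms(5) A _ assms(7)]
      set_integral_eq_real_cond_exp_version[OF assms(6) A _ assms(8)]
    by (simp add: AD_eq_set_integral_ratio)
qed

theorem theorem2:
  fixes M :: "'a measure" and N :: "'b measure"
    and Y1 Y0 :: "'a \<Rightarrow> real" and Z :: "'a \<Rightarrow> 'b" and m1 m0 :: "'b \<Rightarrow> real"
  assumes "prob_space M"
    and "Y1 \<in> borel_measurable M" and "Y0 \<in> borel_measurable M"
    and "Z \<in> M \<rightarrow>\<^sub>M N"
    and "\<forall>x\<in>space M. 0 \<le> Y1 x" and "\<forall>x\<in>space M. 0 \<le> Y0 x"
    and "integrable M Y1" and "integrable M Y0"
    and "m1 \<in> borel_measurable N" and "m0 \<in> borel_measurable N"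
    and "AE x in M. m1 (Z x) = real_cond_exp M (vimage_algebra (space M) Z N) Y1 x"
    and "AE x in M. m0 (Z x) = real_cond_exp M (vimage_algebra (space M) Z N) Y0 x"
    and "AE x in M. 0 < ratio_D m1 m0 (Z x)"
  shows "(\<forall>c c'. c \<le> c' \<and> 0 < measure M {x \<in> space M. c' \<le> ratio_D m1 m0 (Z x)}
            \<longrightarrow> AD M Y1 Y0 (ratio_D m1 m0) Z c \<le> AD M Y1 Y0 (ratio_D m1 m0) Z c')
       \<and> (\<forall>c. 0 < measure M {x \<in> space M. c \<le> ratio_D m1 m0 (Z x)}
            \<longrightarrow> c \<le> AD M Y1 Y0 (ratio_D m1 m0) Z c)"
proof -
  interpret prob_space M by fact
  interpret finite_measure_subalgebra M "vimage_algebra (space M) Z N"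
    by (rule finite_measure_subalgebra_vimage_algebra) fact
  have [measurable]: "Z \<in> M \<rightarrow>\<^sub>M N" "m1 \<in> borel_measurable N" "m0 \<in> borel_measurable N"
    by fact+
  have d: "(\<lambda>x. ratio_D m1 m0 (Z x)) \<in> borel_measurable M"
    unfolding ratio_D_def by measurable
  have int_m1: "integrable M (\<lambda>x. m1 (Z x))"
    by (rule integrable_real_cond_exp_version[OF assms(7) _ assms(11)]) measurable
  have int_m0: "integrable M (\<lambda>x. m0 (Z x))"
    by (rule integrable_real_cond_exp_version[OF assms(8) _ assms(12)]) measurable
  have "AE x in M. 0 \<le> m0 (Z x)"
    using assms(3,6,12) by (rule AE_real_cond_exp_version_nonneg)
  then have factor: "AE x in M. 0 < m0 (Z x) \<and> m1 (Z x) = ratio_D m1 m0 (Z x) * m0 (Z x)"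
    using assms(13) by (rule AE_ratio_D_factor)
  have D: "ratio_D m1 m0 \<in> borel_measurable N"
    unfolding ratio_D_def by measurable
  have AD_eq: "AD M Y1 Y0 (ratio_D m1 m0) Z c =
      (\<integral>x\<in>{x \<in> space M. c \<le> ratio_D m1 m0 (Z x)}. m1 (Z x) \<partial>M)
      / (\<integral>x\<in>{x \<in> space M. c \<le> ratio_D m1 m0 (Z x)}. m0 (Z x) \<partial>M)" for c
    by (rule AD_eq_superlevel_ratio_of_regressions[OF assms(4) D assms(9,10,7,8,11,12)])
  show ?thesis
  proof (intro conjI allI impI)
    fix c c' :: real
    assume "c \<le> c' \<and> 0 < measure M {x \<in> space M. c' \<le> ratio_D m1 m0 (Z x)}"
    then show "AD M Y1 Y0 (ratio_D m1 m0) Z c \<le> AD M Y1 Y0 (ratio_D m1 m0) Z c'"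
      unfolding AD_eq by (intro superlevel_ratio_mono[OF d int_m1 int_m0 factor]) auto
  next
    fix c :: real
    assume "0 < measure M {x \<in> space M. c \<le> ratio_D m1 m0 (Z x)}"
    then show "c \<le> AD M Y1 Y0 (ratio_D m1 m0) Z c"
      unfolding AD_eq by (rule superlevel_ratio_ge[OF d int_m1 int_m0 factor])
  qed
qed

end
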